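(* Let $n\geq2$ and let $f$ be a hypercyclic vector for $W_n^{*}$. Then $\mathcal{N}^{\perp}\cap Z_f(W_n^{*})=\{0\}$.
   Context: $H^2$ denotes the Hardy space of analytic functions $f(z)=\sum_{j\ge0}\hat f(j)z^j$ on the open unit disk $\mathbb{D}$ with $\sum_{j}|\hat f(j)|^2<\infty$. For $n\in\mathbb{N}$, $W_n$ is the bounded operator on $H^2$ given by $W_nf(z)=(1+z+\cdots+z^{n-1})f(z^n)$ and $W_n^{*}$ is its adjoint; $f$ is hypercyclic for $W_n^*$ if its orbit $\{(W_n^* )^jf:j\in\mathbb{N}\}$ is dense. For an operator $T$ and vector $x$, $Z_x(T)=\{p(T)x: p \text{ a polynomial}\}$. For each integer $k\geq2$, $h_k(z)=\frac{1}{1-z}\log\left(\frac{1+z+\cdots+z^{k-1}}{k}\right)$ (holomorphic branch of the logarithm on $\mathbb{D}$, real at $z=0$), which lies in $H^2$; $\mathcal{N}=\mathrm{span}\{h_k:k\geq2\}$ and $\mathcal{N}^\perp$ is its orthogonal complement in $H^2$. *)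

theory Defs
  imports "HOL-Analysis.Analysis" "HOL-Computational_Algebra.Polynomial"
begin

text \<open>H^2 is identified with its Taylor coefficient sequences:
  f(z) = sum_j a j * z^j with sum_j |a j|^2 finite.\<close>

definition H2 :: "(nat \<Rightarrow> complex) set" where
  "H2 = {a. summable (\<lambda>j. (cmod (a j))^2)}"

definition h2inner :: "(nat \<Rightarrow> complex) \<Rightarrow> (nat \<Rightarrow> complex) \<Rightarrow> complex" where
  "h2inner a b = (\<Sum>j. a j * cnj (b j))"

definition h2norm :: "(nat \<Rightarrow> complex) \<Rightarrow> real" where
  "h2norm a = sqrt (\<Sum>j. (cmod (a j))^2)"

text \<open>W_n f(z) = (1 + z + ... + z^(n-1)) f(z^n): the coefficient of z^m is a (m div n).\<close>
definition W :: "nat \<Rightarrow> (nat \<Rightarrow> complex) \<Rightarrow> (nat \<Rightarrow> complex)" where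
  "W n a = (\<lambda>m. a (m div n))"

definition Wstar :: "nat \<Rightarrow> (nat \<Rightarrow> complex) \<Rightarrow> (nat \<Rightarrow> complex)" where
  "Wstar n g = (THE h. h \<in> H2 \<and> (\<forall>f\<in>H2. h2inner (W n f) g = h2inner f h))"

definition hypercyclic :: "((nat \<Rightarrow> complex) \<Rightarrow> (nat \<Rightarrow> complex)) \<Rightarrow> (nat \<Rightarrow> complex) \<Rightarrow> bool" where
  "hypercyclic T f \<longleftrightarrow> f \<in> H2 \<and>
     (\<forall>g\<in>H2. \<forall>e>0. \<exists>j::nat. h2norm (\<lambda>i. (T ^^ j) f i - g i) < e)"

definition Zorb :: "((nat \<Rightarrow> complex) \<Rightarrow> (nat \<Rightarrow> complex)) \<Rightarrow> (nat \<Rightarrow> complex) \<Rightarrow> (nat \<Rightarrow> complex) set" where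
  "Zorb T x = {(\<lambda>i. \<Sum>k\<le>degree p. coeff p k * (T ^^ k) x i) | p :: complex poly. True}"

text \<open>h_k(z) = log((1+...+z^(k-1))/k)/(1-z) on the disk. Since arg(1-z^k) and arg(1/(1-z))
  lie in (-pi/2,pi/2), the principal logarithm Ln gives the holomorphic branch real at 0.\<close>
definition hfun :: "nat \<Rightarrow> complex \<Rightarrow> complex" where
  "hfun k z = Ln ((\<Sum>i<k. z ^ i) / of_nat k) / (1 - z)"

definition hk :: "nat \<Rightarrow> nat \<Rightarrow> complex" where
  "hk k j = (deriv ^^ j) (hfun k) 0 / of_nat (fact j)"

definition Nspan :: "(nat \<Rightarrow> complex) set" where
  "Nspan = {(\<lambda>j. \<Sum>i\<in>S. c i * hk i j) | S c. finite S \<and> S \<subseteq> {2..}}"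

definition Nperp :: "(nat \<Rightarrow> complex) set" where
  "Nperp = {g \<in> H2. \<forall>h\<in>Nspan. h2inner g h = 0}"

end

theory Submission
  imports Defs "HOL-Computational_Algebra.Fundamental_Theorem_Algebra"
begin

text \<open>
  Write \<open>W = W\<^sub>n\<close>. Its adjoint sums blocks of \<open>n\<close> consecutive Taylor coefficients, the
  Taylor coefficients of \<open>h\<^sub>k\<close> are \<open>H\<^sub>j - H\<^bsub>j div k\<^esub> - ln k\<close> (harmonic numbers), which
  decay like \<open>k / j\<close>, and \<open>W\<^sup>j h\<^sub>k = h\<^bsub>k n\<^sup>j\<^esub> - h\<^bsub>n\<^sup>j\<^esub>\<close>. So if \<open>g = p(W\<^sup>*) f\<close> lies in
  \<open>\<N>\<^sup>\<bottom>\<close>, then \<open>\<langle>(W\<^sup>*)\<^sup>j f, p\<^sup>*(W) h\<^sub>2\<rangle> = \<langle>(W\<^sup>*)\<^sup>j g, h\<^sub>2\<rangle> = \<langle>g, W\<^sup>j h\<^sub>2\<rangle> = 0\<close> for all \<open>j\<close>,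
  where \<open>p\<^sup>*\<close> has the conjugate coefficients; density of the orbit of \<open>f\<close> forces
  \<open>p\<^sup>*(W) h\<^sub>2 = 0\<close>. But \<open>W\<close> has no eigenvalues, so every nonzero polynomial in \<open>W\<close> is
  injective (split it into linear factors over \<open>\<complex>\<close>), and \<open>h\<^sub>2 \<noteq> 0\<close>. Hence \<open>p = 0\<close> and
  \<open>g = 0\<close>.
\<close>

section \<open>Coefficient sequences in \<open>H\<^sup>2\<close>\<close>

lemma H2_iff: "x \<in> H2 \<longleftrightarrow> summable (\<lambda>j. (cmod (x j))\<^sup>2)"
  by (simp add: H2_def)

lemma H2_zero: "(\<lambda>_. 0) \<in> H2"
  by (simp add: H2_def)

lemma H2_add:
  assumes "x \<in> H2" "y \<in> H2"
  shows "(\<lambda>j. x j + y j) \<in> H2"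
  unfolding H2_iff
proof (rule summable_comparison_test')
  show "summable (\<lambda>j. 2 * (cmod (x j))\<^sup>2 + 2 * (cmod (y j))\<^sup>2)"
    using assms by (intro summable_add summable_mult) (auto simp: H2_iff)
  fix j
  have "(cmod (x j + y j))\<^sup>2 \<le> (cmod (x j) + cmod (y j))\<^sup>2"
    by (intro power_mono norm_triangle_ineq) auto
  also have "\<dots> \<le> 2 * (cmod (x j))\<^sup>2 + 2 * (cmod (y j))\<^sup>2"
    using sum_squares_bound[of "cmod (x j)" "cmod (y j)"] unfolding power2_sum by linarith
  finally show "norm ((cmod (x j + y j))\<^sup>2) \<le> 2 * (cmod (x j))\<^sup>2 + 2 * (cmod (y j))\<^sup>2"
    by simp
qed

lemma H2_cmult:
  assumes "x \<in> H2"
  shows "(\<lambda>j. c * x j) \<in> H2"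
  using summable_mult[of "\<lambda>j. (cmod (x j))\<^sup>2" "(cmod c)\<^sup>2"] assms
  by (simp add: H2_iff norm_mult power_mult_distrib)

lemma H2_sum:
  assumes "finite S" "\<And>k. k \<in> S \<Longrightarrow> x k \<in> H2"
  shows "(\<lambda>j. \<Sum>k\<in>S. c k * x k j) \<in> H2"
  using assms
proof (induction S rule: finite_induct)
  case empty
  then show ?case by (simp add: H2_zero)
next
  case (insert a S)
  have "(\<lambda>j. c a * x a j + (\<Sum>k\<in>S. c k * x k j)) \<in> H2"
    using insert by (intro H2_add H2_cmult) auto
  then show ?case using insert by simp
qed

lemma h2inner_summable:
  assumes "x \<in> H2" "y \<in> H2"
  shows "summable (\<lambda>j. x j * cnj (y j))"
proof (rule summable_norm_cancel, rule summable_comparison_test')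
  show "summable (\<lambda>j. (cmod (x j))\<^sup>2 + (cmod (y j))\<^sup>2)"
    using assms by (intro summable_add) (auto simp: H2_iff)
  fix j
  have "0 \<le> cmod (x j) * cmod (y j)"
    by simp
  then have "cmod (x j) * cmod (y j) \<le> (cmod (x j))\<^sup>2 + (cmod (y j))\<^sup>2"
    using sum_squares_bound[of "cmod (x j)" "cmod (y j)"] by linarith
  then show "norm (norm (x j * cnj (y j))) \<le> (cmod (x j))\<^sup>2 + (cmod (y j))\<^sup>2"
    by (simp add: norm_mult)
qed

lemma h2inner_commute:
  assumes "x \<in> H2" "y \<in> H2"
  shows "h2inner y x = cnj (h2inner x y)"
proof -
  have "(\<lambda>j. cnj (x j * cnj (y j))) sums cnj (h2inner x y)"
    unfolding h2inner_def sums_cnj using assms by (intro summable_sums h2inner_summable)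
  then show ?thesis
    unfolding h2inner_def by (simp add: sums_iff mult.commute)
qed

lemma h2inner_sum_left:
  assumes "finite S" "\<And>k. k \<in> S \<Longrightarrow> x k \<in> H2" "y \<in> H2"
  shows "h2inner (\<lambda>j. \<Sum>k\<in>S. c k * x k j) y = (\<Sum>k\<in>S. c k * h2inner (x k) y)"
proof -
  have "h2inner (\<lambda>j. \<Sum>k\<in>S. c k * x k j) y = (\<Sum>j. \<Sum>k\<in>S. c k * (x k j * cnj (y j)))"
    unfolding h2inner_def by (simp add: sum_distrib_right mult.assoc)
  also have "\<dots> = (\<Sum>k\<in>S. \<Sum>j. c k * (x k j * cnj (y j)))"
    using assms by (intro suminf_sum summable_mult h2inner_summable) auto
  also have "\<dots> = (\<Sum>k\<in>S. c k * h2inner (x k) y)"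
    unfolding h2inner_def using assms by (intro sum.cong refl suminf_mult h2inner_summable) auto
  finally show ?thesis .
qed

lemma h2inner_sum_right:
  assumes "finite S" "\<And>k. k \<in> S \<Longrightarrow> y k \<in> H2" "x \<in> H2"
  shows "h2inner x (\<lambda>j. \<Sum>k\<in>S. c k * y k j) = (\<Sum>k\<in>S. cnj (c k) * h2inner x (y k))"
proof -
  have "h2inner x (\<lambda>j. \<Sum>k\<in>S. c k * y k j) = cnj (h2inner (\<lambda>j. \<Sum>k\<in>S. c k * y k j) x)"
    using assms by (intro h2inner_commute H2_sum)
  also have "\<dots> = (\<Sum>k\<in>S. cnj (c k * h2inner (y k) x))"
    using assms by (simp add: h2inner_sum_left)
  also have "\<dots> = (\<Sum>k\<in>S. cnj (c k) * h2inner x (y k))"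
    using assms by (intro sum.cong refl) (simp add: h2inner_commute[of x])
  finally show ?thesis .
qed

lemma h2inner_diff_right:
  assumes "x \<in> H2" "y \<in> H2" "z \<in> H2"
  shows "h2inner x (\<lambda>j. y j - z j) = h2inner x y - h2inner x z"
proof -
  have "h2inner x (\<lambda>j. y j - z j) = (\<Sum>j. x j * cnj (y j) - x j * cnj (z j))"
    unfolding h2inner_def by (simp add: algebra_simps)
  also have "\<dots> = h2inner x y - h2inner x z"
    unfolding h2inner_def using assms by (intro suminf_diff[symmetric] h2inner_summable)
  finally show ?thesis .
qed

lemma h2norm_le_diff_if_orthogonal:
  assumes x: "x \<in> H2" and y: "y \<in> H2" and orth: "h2inner x y = 0"
  shows "h2norm y \<le> h2norm (\<lambda>i. x i - y i)"
proof -
  have "(\<lambda>j. x j * cnj (y j)) sums 0"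
    using summable_sums[OF h2inner_summable[OF x y]] orth by (simp add: h2inner_def)
  then have "(\<lambda>j. (cmod (x j))\<^sup>2 + (cmod (y j))\<^sup>2 - 2 * Re (x j * cnj (y j))) sums
        ((\<Sum>j. (cmod (x j))\<^sup>2) + (\<Sum>j. (cmod (y j))\<^sup>2) - 2 * Re 0)"
    using x y by (intro sums_add sums_diff sums_mult sums_Re summable_sums) (auto simp: H2_iff)
  moreover have "(cmod (x j - y j))\<^sup>2 = (cmod (x j))\<^sup>2 + (cmod (y j))\<^sup>2 - 2 * Re (x j * cnj (y j))"
    for j
    unfolding cmod_power2 by (simp add: power2_eq_square algebra_simps)
  ultimately have "(\<Sum>j. (cmod (x j - y j))\<^sup>2) = (\<Sum>j. (cmod (x j))\<^sup>2) + (\<Sum>j. (cmod (y j))\<^sup>2)"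
    by (simp add: sums_iff)
  moreover have "0 \<le> (\<Sum>j. (cmod (x j))\<^sup>2)"
    using x by (intro suminf_nonneg) (auto simp: H2_iff)
  ultimately show ?thesis
    unfolding h2norm_def by simp
qed

lemma h2norm_eq_0_imp_zero:
  assumes "x \<in> H2" "h2norm x = 0"
  shows "x = (\<lambda>_. 0)"
proof -
  have "(\<Sum>j. (cmod (x j))\<^sup>2) = 0"
    using assms(2) unfolding h2norm_def by simp
  then have "\<forall>j. (cmod (x j))\<^sup>2 = 0"
    using assms(1) by (subst (asm) suminf_eq_zero_iff) (auto simp: H2_iff)
  then show ?thesis by auto
qed

lemma funpow_H2:
  assumes "\<And>y. y \<in> H2 \<Longrightarrow> T y \<in> H2" "x \<in> H2"
  shows "(T ^^ k) x \<in> H2"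
  by (induction k) (simp_all add: assms)

text \<open>Orthogonality gives \<open>\<parallel>T\<^sup>j f - u\<parallel> \<ge> \<parallel>u\<parallel>\<close>, so density of the orbit forces \<open>u = 0\<close>.\<close>

lemma orthogonal_hypercyclic_orbit:
  assumes hc: "hypercyclic T f" and orbit: "\<And>j. (T ^^ j) f \<in> H2"
    and u: "u \<in> H2" and orth: "\<And>j. h2inner ((T ^^ j) f) u = 0"
  shows "u = (\<lambda>_. 0)"
proof (rule h2norm_eq_0_imp_zero[OF u], rule ccontr)
  assume "h2norm u \<noteq> 0"
  moreover have "h2norm u \<ge> 0"
    unfolding h2norm_def using u by (intro real_sqrt_ge_zero suminf_nonneg) (auto simp: H2_iff)
  ultimately have "h2norm u > 0"
    by simp
  then obtain j where "h2norm (\<lambda>i. (T ^^ j) f i - u i) < h2norm u"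
    using hc u unfolding hypercyclic_def by blast
  with h2norm_le_diff_if_orthogonal[OF orbit[of j] u orth[of j]] show False
    by simp
qed

section \<open>The operator \<open>W\<^sub>n\<close> and its adjoint\<close>

lemma W_funpow: "(W n ^^ k) x m = x (m div n ^ k)"
  by (induction k arbitrary: m) (simp_all add: W_def div_mult2_eq mult.commute)

lemma div_eq_if_in_block:
  fixes m j n :: nat
  assumes "m \<in> {j * n..<j * n + n}"
  shows "m div n = j"
  using assms by (intro div_nat_eqI) (auto simp: mult.commute)

lemma sum_block_eq:
  fixes j n :: nat
  shows "sum f {j * n..<j * n + n} = (\<Sum>i<n. f (n * j + i))"
proof -
  have "sum f {j * n..<j * n + n} = sum f {0 + j * n..<n + j * n}"
    by (simp add: add.commute)
  also have "\<dots> = (\<Sum>i<n. f (n * j + i))"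
    unfolding sum.shift_bounds_nat_ivl by (simp add: atLeast0LessThan algebra_simps)
  finally show ?thesis .
qed

lemma W_H2:
  assumes n: "n \<ge> 1" and x: "x \<in> H2"
  shows "W n x \<in> H2"
  unfolding H2_iff
proof (rule summableI_nonneg_bounded)
  fix N
  let ?f = "\<lambda>m. (cmod (W n x m))\<^sup>2"
  have "(\<Sum>m<N. ?f m) \<le> (\<Sum>m<N * n. ?f m)"
    using n by (intro sum_mono2) auto
  also have "\<dots> = (\<Sum>j<N. sum ?f {j * n..<j * n + n})"
    by (rule sum.nat_group[symmetric])
  also have "\<dots> = (\<Sum>j<N. real n * (cmod (x j))\<^sup>2)"
  proof (intro sum.cong refl)
    fix j
    have "sum ?f {j * n..<j * n + n} = sum (\<lambda>_. (cmod (x j))\<^sup>2) {j * n..<j * n + n}"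
      by (intro sum.cong refl) (simp add: W_def div_eq_if_in_block)
    then show "sum ?f {j * n..<j * n + n} = real n * (cmod (x j))\<^sup>2"
      by simp
  qed
  also have "\<dots> \<le> real n * (\<Sum>j. (cmod (x j))\<^sup>2)"
    using x by (simp add: sum_distrib_left[symmetric] H2_iff mult_left_mono sum_le_suminf)
  finally show "(\<Sum>m<N. ?f m) \<le> real n * (\<Sum>j. (cmod (x j))\<^sup>2)" .
qed auto

text \<open>\<^term>\<open>W n\<close> repeats every coefficient \<open>n\<close> times, so its adjoint sums blocks of \<open>n\<close>
  consecutive coefficients.\<close>

definition Wadj :: "nat \<Rightarrow> (nat \<Rightarrow> complex) \<Rightarrow> (nat \<Rightarrow> complex)" where
  "Wadj n g = (\<lambda>j. \<Sum>i<n. g (n * j + i))"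

lemma Wadj_H2:
  assumes n: "n \<ge> 1" and g: "g \<in> H2"
  shows "Wadj n g \<in> H2"
  unfolding H2_iff
proof (rule summable_comparison_test')
  let ?f = "\<lambda>m. (cmod (g m))\<^sup>2"
  have "(\<lambda>j. sum ?f {j * n..<j * n + n}) sums (\<Sum>m. ?f m)"
    using g n by (intro sums_group summable_sums) (auto simp: H2_iff)
  then show "summable (\<lambda>j. real n * (\<Sum>i<n. ?f (n * j + i)))"
    by (intro summable_mult) (simp add: sums_summable sum_block_eq)
  fix j
  have "cmod (Wadj n g j) \<le> (\<Sum>i<n. cmod (g (n * j + i)))"
    unfolding Wadj_def by (rule norm_sum)
  then have "(cmod (Wadj n g j))\<^sup>2 \<le> (\<Sum>i<n. 1 * cmod (g (n * j + i)))\<^sup>2"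
    by (intro power_mono) auto
  also have "\<dots> \<le> (\<Sum>i<n. 1\<^sup>2) * (\<Sum>i<n. ?f (n * j + i))"
    by (rule Cauchy_Schwarz_ineq_sum)
  finally show "norm ((cmod (Wadj n g j))\<^sup>2) \<le> real n * (\<Sum>i<n. ?f (n * j + i))"
    by simp
qed

lemma h2inner_W_Wadj:
  assumes n: "n \<ge> 1" and f: "f \<in> H2" and g: "g \<in> H2"
  shows "h2inner (W n f) g = h2inner f (Wadj n g)"
proof -
  let ?s = "\<lambda>m. W n f m * cnj (g m)"
  have "(\<lambda>j. sum ?s {j * n..<j * n + n}) sums (\<Sum>m. ?s m)"
    using n W_H2[OF n f] g by (intro sums_group summable_sums h2inner_summable) auto
  also have "(\<lambda>j. sum ?s {j * n..<j * n + n}) = (\<lambda>j. f j * cnj (Wadj n g j))"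
  proof
    fix j
    have "sum ?s {j * n..<j * n + n} = sum (\<lambda>m. f j * cnj (g m)) {j * n..<j * n + n}"
      by (intro sum.cong refl) (simp add: W_def div_eq_if_in_block)
    then show "sum ?s {j * n..<j * n + n} = f j * cnj (Wadj n g j)"
      by (simp add: sum_block_eq Wadj_def sum_distrib_left cnj_sum)
  qed
  finally show ?thesis
    unfolding h2inner_def by (simp add: sums_iff)
qed

lemma h2inner_unit_vector: "h2inner (\<lambda>m. if m = j then 1 else 0) x = cnj (x j)"
proof -
  have "(\<lambda>m. (if m = j then 1 else 0) * cnj (x m)) = (\<lambda>m. if m = j then cnj (x m) else 0)"
    by auto
  then show ?thesis
    unfolding h2inner_def using sums_single[of j "\<lambda>m. cnj (x m)"] by (simp add: sums_iff)
qed

lemma unit_vector_H2: "(\<lambda>m. if m = j then 1 else 0 :: complex) \<in> H2"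
proof -
  have "(\<lambda>m. (cmod (if m = j then 1 else 0 :: complex))\<^sup>2) = (\<lambda>m. if m = j then 1 else 0)"
    by auto
  then show ?thesis
    unfolding H2_iff by simp
qed

lemma Wstar_eq_Wadj:
  assumes n: "n \<ge> 1" and g: "g \<in> H2"
  shows "Wstar n g = Wadj n g"
  unfolding Wstar_def
proof (rule the_equality)
  show "Wadj n g \<in> H2 \<and> (\<forall>f\<in>H2. h2inner (W n f) g = h2inner f (Wadj n g))"
    using Wadj_H2[OF n g] h2inner_W_Wadj[OF n _ g] by auto
  fix h assume h: "h \<in> H2 \<and> (\<forall>f\<in>H2. h2inner (W n f) g = h2inner f h)"
  show "h = Wadj n g"
  proof
    fix j :: nat
    let ?e = "\<lambda>m. if m = j then 1 else 0 :: complex"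
    have "cnj (h j) = h2inner (W n ?e) g"
      using h unit_vector_H2 by (simp add: h2inner_unit_vector)
    also have "\<dots> = cnj (Wadj n g j)"
      using h2inner_W_Wadj[OF n unit_vector_H2 g] by (simp add: h2inner_unit_vector)
    finally show "h j = Wadj n g j"
      by simp
  qed
qed

lemma Wstar_funpow_eq_Wadj_funpow:
  assumes n: "n \<ge> 1" and g: "g \<in> H2"
  shows "(Wstar n ^^ k) g = (Wadj n ^^ k) g"
  by (induction k) (simp_all add: Wstar_eq_Wadj[OF n] funpow_H2[OF Wadj_H2[OF n] g])

lemma hypercyclic_Wstar_iff:
  assumes "n \<ge> 1"
  shows "hypercyclic (Wstar n) f \<longleftrightarrow> hypercyclic (Wadj n) f"
  unfolding hypercyclic_def
  by (intro conj_cong refl) (simp add: Wstar_funpow_eq_Wadj_funpow[OF assms])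

lemma h2inner_W_funpow_right:
  assumes n: "n \<ge> 1" and f: "f \<in> H2" and g: "g \<in> H2"
  shows "h2inner f ((W n ^^ k) g) = h2inner ((Wadj n ^^ k) f) g"
  using g
proof (induction k arbitrary: g)
  case (Suc k)
  let ?f = "(Wadj n ^^ k) f"
  have f': "?f \<in> H2"
    using Wadj_H2[OF n] f by (rule funpow_H2)
  have "h2inner f ((W n ^^ Suc k) g) = h2inner ?f (W n g)"
    using Suc W_H2[OF n] by (simp add: funpow_Suc_right del: funpow.simps)
  also have "\<dots> = cnj (h2inner g (Wadj n ?f))"
    using Suc.prems f' by (simp add: h2inner_commute[of _ ?f] W_H2[OF n] h2inner_W_Wadj[OF n])
  also have "\<dots> = h2inner (Wadj n ?f) g"
    using Suc.prems f' by (simp add: h2inner_commute[of g] Wadj_H2[OF n])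
  finally show ?case
    by simp
qed simp

lemma nat_div_induct:
  fixes n :: nat
  assumes "n \<ge> 2" and "P 0" and step: "\<And>m. m \<noteq> 0 \<Longrightarrow> P (m div n) \<Longrightarrow> P m"
  shows "P m"
proof (induction m rule: less_induct)
  case (less m)
  show ?case
    using assms less.IH[of "m div n"] by (cases "m = 0") auto
qed

lemma W_no_eigenvalue:
  assumes n: "n \<ge> 2" and u: "u \<in> H2" and eigen: "W n u = (\<lambda>m. a * u m)"
  shows "u = (\<lambda>_. 0)"
proof -
  have eq: "u (m div n) = a * u m" for m
    using fun_cong[OF eigen, of m] by (simp add: W_def)
  consider "a = 1" | "a = 0" | "a \<noteq> 0" "a \<noteq> 1"
    by blast
  then show ?thesis
  proof cases
    case 1
    have const: "u m = u 0" for m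
      using n by (rule nat_div_induct) (use eq 1 in auto)
    have "(\<lambda>j. (cmod (u j))\<^sup>2) = (\<lambda>_. (cmod (u 0))\<^sup>2)"
    proof
      show "(cmod (u j))\<^sup>2 = (cmod (u 0))\<^sup>2" for j
        using const[of j] by simp
    qed
    then have "u 0 = 0"
      using u by (simp add: H2_iff summable_const_iff)
    then show ?thesis
      using const by (metis (no_types))
  next
    case 2
    then show ?thesis
      using eq[of "m * n" for m] n by auto
  next
    case 3
    have "(1 - a) * u 0 = 0"
      using eq[of 0] by (simp add: algebra_simps)
    then have "u 0 = 0"
      using 3 by simp
    have "u m = 0" for m
      using n \<open>u 0 = 0\<close> by (rule nat_div_induct) (use eq 3 in auto)
    then show ?thesis
      by auto
  qed
qed

section \<open>Polynomials in an operator\<close>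

text \<open>Complex linearity, as far as \<open>p(T)\<close> needs it; the library's \<^const>\<open>linear\<close> is real-linear
  and needs a vector space type.\<close>

definition seq_linear :: "((nat \<Rightarrow> complex) \<Rightarrow> (nat \<Rightarrow> complex)) \<Rightarrow> bool" where
  "seq_linear T \<longleftrightarrow> (\<forall>(S :: nat set) c x. finite S \<longrightarrow>
     T (\<lambda>i. \<Sum>k\<in>S. c k * x k i) = (\<lambda>i. \<Sum>k\<in>S. c k * T (x k) i))"

lemma seq_linear_funpow:
  assumes "seq_linear T"
  shows "seq_linear (T ^^ j)"
proof (induction j)
  case (Suc j)
  then show ?case
    using assms unfolding seq_linear_def by simp
qed (simp add: seq_linear_def)

lemma seq_linear_W: "seq_linear (W n)"
  by (simp add: seq_linear_def W_def)

lemma seq_linear_Wadj: "seq_linear (Wadj n)"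
  unfolding seq_linear_def Wadj_def by (simp add: sum_distrib_left sum.swap[of _ "{..<n}"])

definition poly_op ::
    "complex poly \<Rightarrow> ((nat \<Rightarrow> complex) \<Rightarrow> (nat \<Rightarrow> complex)) \<Rightarrow> (nat \<Rightarrow> complex) \<Rightarrow> (nat \<Rightarrow> complex)"
  where "poly_op p T x = (\<lambda>i. \<Sum>k\<le>degree p. coeff p k * (T ^^ k) x i)"

lemma Zorb_eq_range_poly_op: "Zorb T x = range (\<lambda>p. poly_op p T x)"
  by (auto simp: Zorb_def poly_op_def)

lemma Zorb_Wstar:
  assumes "n \<ge> 1" "f \<in> H2"
  shows "Zorb (Wstar n) f = range (\<lambda>p. poly_op p (Wadj n) f)"
  using Wstar_funpow_eq_Wadj_funpow[OF assms] by (simp add: Zorb_eq_range_poly_op poly_op_def)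

lemma poly_op_0 [simp]: "poly_op 0 T x = (\<lambda>_. 0)"
  by (simp add: poly_op_def)

lemma poly_op_degree_le:
  assumes "degree p \<le> N"
  shows "poly_op p T x = (\<lambda>i. \<Sum>k\<le>N. coeff p k * (T ^^ k) x i)"
  unfolding poly_op_def
  by (intro ext sum.mono_neutral_left) (use assms in \<open>auto simp: coeff_eq_0\<close>)

lemma poly_op_add: "poly_op (p + q) T x = (\<lambda>i. poly_op p T x i + poly_op q T x i)"
proof -
  let ?N = "max (degree p) (degree q)"
  have "degree (p + q) \<le> ?N"
    by (rule degree_add_le) auto
  then show ?thesis
    by (simp add: poly_op_degree_le[of _ ?N] sum.distrib algebra_simps)
qed

lemma poly_op_smult: "poly_op (smult c p) T x = (\<lambda>i. c * poly_op p T x i)"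
  by (simp add: poly_op_degree_le[OF degree_smult_le] poly_op_def sum_distrib_left mult.assoc)

lemma poly_op_pCons_0:
  assumes "seq_linear T"
  shows "poly_op (pCons 0 p) T x = T (poly_op p T x)"
proof -
  have "poly_op (pCons 0 p) T x = (\<lambda>i. \<Sum>k\<le>Suc (degree p). coeff (pCons 0 p) k * (T ^^ k) x i)"
    by (rule poly_op_degree_le) (simp add: degree_pCons_le)
  also have "\<dots> = (\<lambda>i. \<Sum>k\<le>degree p. coeff p k * T ((T ^^ k) x) i)"
    by (subst sum.atMost_Suc_shift) simp
  also have "\<dots> = T (poly_op p T x)"
    using assms by (simp add: seq_linear_def poly_op_def)
  finally show ?thesis .
qed

lemma poly_op_linear_factor:
  assumes "seq_linear T"
  shows "poly_op ([:-a, 1:] * p) T x = (\<lambda>i. T (poly_op p T x) i - a * poly_op p T x i)"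
proof -
  have factor: "[:-a, 1:] * p = smult (-a) p + pCons 0 p"
    by simp
  show ?thesis
    unfolding factor poly_op_add poly_op_smult poly_op_pCons_0[OF assms] by simp
qed

lemma funpow_poly_op_commute:
  assumes "seq_linear T"
  shows "(T ^^ j) (poly_op p T x) = poly_op p T ((T ^^ j) x)"
proof -
  have "(T ^^ j) ((T ^^ k) x) = (T ^^ k) ((T ^^ j) x)" for k
    by (metis add.commute comp_apply funpow_add)
  then show ?thesis
    using seq_linear_funpow[OF assms, of j] by (simp add: seq_linear_def poly_op_def)
qed

lemma poly_op_H2:
  assumes "\<And>y. y \<in> H2 \<Longrightarrow> T y \<in> H2" "x \<in> H2"
  shows "poly_op p T x \<in> H2"
  unfolding poly_op_def using funpow_H2[OF assms] by (intro H2_sum) auto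

text \<open>Over \<open>\<complex>\<close> a nonzero polynomial splits into linear factors, so \<open>p(T)\<close> is injective as
  soon as \<open>T\<close> has no eigenvalues.\<close>

lemma poly_op_eq_0_imp_zero:
  assumes lin: "seq_linear T" and T: "\<And>y. y \<in> H2 \<Longrightarrow> T y \<in> H2"
    and no_eigenvalue: "\<And>a u. u \<in> H2 \<Longrightarrow> T u = (\<lambda>i. a * u i) \<Longrightarrow> u = (\<lambda>_. 0)"
    and x: "x \<in> H2" and "p \<noteq> 0" and "poly_op p T x = (\<lambda>_. 0)"
  shows "x = (\<lambda>_. 0)"
  using assms(5,6)
proof (induction "degree p" arbitrary: p rule: less_induct)
  case less
  show ?case
  proof (cases "degree p = 0")
    case True
    then obtain c where "p = [:c:]" and "c \<noteq> 0"
      using less.prems by (metis degree_eq_zeroE pCons_eq_0_iff)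
    then show ?thesis
      using less.prems(2) by (simp add: poly_op_def fun_eq_iff)
  next
    case False
    then have "\<not> constant (poly p)"
      by (simp add: constant_degree)
    then obtain a where "poly p a = 0"
      using fundamental_theorem_of_algebra by blast
    then obtain r where p: "p = [:-a, 1:] * r"
      by (auto simp: poly_eq_0_iff_dvd elim!: dvdE)
    with less.prems have "r \<noteq> 0"
      by auto
    then have "degree r < degree p"
      unfolding p by (subst degree_mult_eq) auto
    have "T (poly_op r T x) = (\<lambda>i. a * poly_op r T x i)"
      using less.prems(2) unfolding p poly_op_linear_factor[OF lin] by (simp add: fun_eq_iff)
    then have "poly_op r T x = (\<lambda>_. 0)"
      using poly_op_H2[OF T x] by (rule no_eigenvalue[rotated])
    with \<open>degree r < degree p\<close> \<open>r \<noteq> 0\<close> show ?thesis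
      by (rule less.hyps)
  qed
qed

lemma map_poly_cnj_eq_0_iff [simp]: "map_poly cnj p = 0 \<longleftrightarrow> p = 0"
  by (rule map_poly_eq_0_iff) auto

lemma h2inner_poly_op_W:
  assumes n: "n \<ge> 1" and x: "x \<in> H2" and y: "y \<in> H2"
  shows "h2inner x (poly_op (map_poly cnj p) (W n) y) = h2inner (poly_op p (Wadj n) x) y"
proof -
  have "poly_op (map_poly cnj p) (W n) y = (\<lambda>i. \<Sum>k\<le>degree p. cnj (coeff p k) * (W n ^^ k) y i)"
    by (simp add: poly_op_def degree_map_poly coeff_map_poly)
  then have "h2inner x (poly_op (map_poly cnj p) (W n) y) =
      (\<Sum>k\<le>degree p. coeff p k * h2inner x ((W n ^^ k) y))"
    using funpow_H2[OF W_H2[OF n] y] x by (simp add: h2inner_sum_right)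
  also have "\<dots> = (\<Sum>k\<le>degree p. coeff p k * h2inner ((Wadj n ^^ k) x) y)"
    by (simp add: h2inner_W_funpow_right[OF n x y])
  also have "\<dots> = h2inner (poly_op p (Wadj n) x) y"
    unfolding poly_op_def using funpow_H2[OF Wadj_H2[OF n] x] y by (simp add: h2inner_sum_left)
  finally show ?thesis .
qed

section \<open>Taylor coefficients of \<open>h\<^sub>k\<close>\<close>

text \<open>\<open>Ln\<close> is additive here because \<open>1 - z\<^sup>k\<close> and \<open>1 / (1 - z)\<close> both lie in the right
  half plane, so their arguments add up to less than \<open>\<pi>\<close> in absolute value.\<close>

lemma Ln_geometric_sum_div:
  fixes z :: complex
  assumes k: "k \<ge> 1" and z: "norm z < 1"
  shows "Ln ((\<Sum>i<k. z ^ i) / of_nat k) = Ln (1 - z ^ k) - Ln (1 - z) - of_real (ln (real k))"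
proof -
  have norm_zk: "norm (z ^ k) < 1" using z k by (simp add: norm_power power_less_one_iff)
  have re_z: "Re (1 - z) > 0" using z complex_Re_le_cmod[of z] by simp
  have re_zk: "Re (1 - z ^ k) > 0" using norm_zk complex_Re_le_cmod[of "z^k"] by simp
  have nz_z: "1 - z \<noteq> 0" and nz_zk: "1 - z ^ k \<noteq> 0" using re_z re_zk by auto
  have re_inv: "Re (inverse (1 - z)) > 0" using re_z nz_z
    by (simp add: Re_divide inverse_eq_divide) (auto intro!: divide_pos_pos add_pos_nonneg)
  have geom: "(\<Sum>i<k. z ^ i) = (1 - z ^ k) * inverse (1 - z)"
    using z by (auto simp: sum_gp_strict divide_inverse)
  have eq: "(\<Sum>i<k. z ^ i) / of_nat k = of_real (1 / real k) * ((1 - z ^ k) * inverse (1 - z))"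
    using geom by (simp add: field_simps)
  have "Ln ((\<Sum>i<k. z ^ i) / of_nat k) = Ln (of_real (1 / real k) * ((1 - z ^ k) * inverse (1 - z)))"
    using eq by (rule arg_cong)
  also have "\<dots> = Ln (of_real (1 / real k)) + Ln ((1 - z ^ k) * inverse (1 - z))"
    using nz_z nz_zk k by (intro Ln_times_of_real) auto
  also have "Ln (of_real (1 / real k)) = of_real (ln (1 / real k))"
    using k by (intro Ln_of_real) auto
  also have "Ln ((1 - z ^ k) * inverse (1 - z)) = Ln (1 - z ^ k) + Ln (inverse (1 - z))"
  proof (rule Ln_times_simple)
    show "-pi < Im (Ln (1 - z ^ k)) + Im (Ln (inverse (1 - z)))"
      using Re_Ln_pos_lt_imp[OF re_zk] Re_Ln_pos_lt_imp[OF re_inv] by linarith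
    show "Im (Ln (1 - z ^ k)) + Im (Ln (inverse (1 - z))) \<le> pi"
      using Re_Ln_pos_lt_imp[OF re_zk] Re_Ln_pos_lt_imp[OF re_inv] by linarith
  qed (use nz_z nz_zk in auto)
  also have "Ln (inverse (1 - z)) = - Ln (1 - z)"
    by (rule Ln_inverse) (use re_z in \<open>auto simp: complex_nonpos_Reals_iff\<close>)
  finally show ?thesis by (simp add: ln_div)
qed

text \<open>Taylor coefficients of \<open>log(1 - z\<^sup>k) - log(1 - z) - ln k\<close>; at \<open>m = 0\<close> only the constant
  term survives because \<open>1 / 0 = 0\<close> in HOL.\<close>

definition hlog_coeff :: "nat \<Rightarrow> nat \<Rightarrow> complex" where
  "hlog_coeff k m = (if m = 0 then - of_real (ln (real k)) else 0) + 1 / of_nat m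
     - (if k dvd m then of_nat k / of_nat m else 0)"

lemma hlog_coeff_sums:
  fixes z :: complex
  assumes k: "k \<ge> 1" and z: "norm z < 1"
  shows "(\<lambda>m. hlog_coeff k m * z ^ m) sums Ln ((\<Sum>i<k. z ^ i) / of_nat k)"
proof -
  have ln_z: "(\<lambda>m. - (z ^ m / of_nat m)) sums Ln (1 - z)"
    using Ln_series'[of "-z"] z by simp
  have norm_zk: "norm (z ^ k) < 1" using z k by (simp add: norm_power power_less_one_iff)
  have ln_zk: "(\<lambda>m. - ((z ^ k) ^ m / of_nat m)) sums Ln (1 - z ^ k)"
    using Ln_series'[of "- (z ^ k)"] norm_zk by simp
  define f where "f m = (if k dvd m then - (of_nat k / of_nat m) * z ^ m else 0)" for m
  have mono_k: "strict_mono (\<lambda>m. k * m)" using k by (auto intro!: strict_monoI)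
  have "(\<lambda>m. f (k * m)) = (\<lambda>m. - ((z ^ k) ^ m / of_nat m))"
    using k by (auto simp: f_def power_mult fun_eq_iff)
  hence "(\<lambda>m. f (k * m)) sums Ln (1 - z ^ k)" using ln_zk by simp
  hence ln_zk_sparse: "f sums Ln (1 - z ^ k)"
    by (subst (asm) sums_mono_reindex[OF mono_k]) (auto simp: f_def)
  have const: "(\<lambda>m. if m = 0 then - of_real (ln (real k)) else 0) sums (- of_real (ln (real k)) :: complex)"
    using sums_single[of 0 "\<lambda>_. - of_real (ln (real k)) :: complex"] by simp
  have "(\<lambda>m. (if m = 0 then - of_real (ln (real k)) else 0) + f m - - (z ^ m / of_nat m))
        sums (- of_real (ln (real k)) + Ln (1 - z ^ k) - Ln (1 - z))"
    by (intro sums_add sums_diff ln_z ln_zk_sparse const)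
  also have "(\<lambda>m. (if m = 0 then - of_real (ln (real k)) else 0) + f m - - (z ^ m / of_nat m))
        = (\<lambda>m. hlog_coeff k m * z ^ m)"
    by (auto simp: fun_eq_iff hlog_coeff_def f_def field_simps)
  also have "- of_real (ln (real k)) + Ln (1 - z ^ k) - Ln (1 - z) = Ln ((\<Sum>i<k. z ^ i) / of_nat k)"
    using Ln_geometric_sum_div[OF k z] by (simp add: algebra_simps)
  finally show ?thesis .
qed

lemma hfun_has_fps_expansion:
  assumes k: "k \<ge> 1"
  shows "hfun k has_fps_expansion (Abs_fps (hlog_coeff k) * Abs_fps (\<lambda>_. 1))"
proof -
  have ev: "eventually (\<lambda>z::complex. norm z < 1) (nhds 0)"
    using eventually_nhds_in_open[of "ball 0 1" 0] by (auto elim!: eventually_mono simp: dist_norm)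
  have log_part: "(\<lambda>z. Ln ((\<Sum>i<k. z ^ i) / of_nat k)) has_fps_expansion Abs_fps (hlog_coeff k)"
    by (rule has_fps_expansionI) (use ev hlog_coeff_sums[OF k] in \<open>auto elim!: eventually_mono\<close>)
  have geometric: "(\<lambda>z::complex. 1 / (1 - z)) has_fps_expansion Abs_fps (\<lambda>_. 1)"
    by (rule has_fps_expansionI) (use ev geometric_sums in \<open>auto elim!: eventually_mono\<close>)
  have "(\<lambda>z. Ln ((\<Sum>i<k. z ^ i) / of_nat k) * (1 / (1 - z))) has_fps_expansion
          (Abs_fps (hlog_coeff k) * Abs_fps (\<lambda>_. 1))"
    by (rule has_fps_expansion_mult[OF log_part geometric])
  also have "(\<lambda>z. Ln ((\<Sum>i<k. z ^ i) / of_nat k) * (1 / (1 - z))) = hfun k"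
    by (simp add: fun_eq_iff hfun_def)
  finally show ?thesis .
qed

lemma harm_Suc_div:
  assumes k: "k \<ge> 1"
  shows "harm (Suc j div k) = harm (j div k) + (if k dvd Suc j then real k / real (Suc j) else 0 :: real)"
proof (cases "k dvd Suc j")
  case True
  then obtain q where q: "Suc j = k * Suc q"
    by (metis dvdE mult_0_right nat.distinct(1) not0_implies_Suc)
  have "j div k = q"
    using q k by (intro div_nat_eqI) (auto simp: mult.commute)
  moreover have "Suc j div k = Suc q"
    using q k by simp
  moreover have "real k / real (Suc j) = 1 / real (Suc q)"
    using k unfolding q of_nat_mult by (intro nonzero_divide_mult_cancel_left) simp
  ultimately show ?thesis
    using True by (simp add: harm_Suc inverse_eq_divide)
next
  case False
  then show ?thesis
    by (simp add: div_Suc dvd_eq_mod_eq_0)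
qed

lemma sum_hlog_coeff:
  assumes k: "k \<ge> 1"
  shows "(\<Sum>i\<le>j. hlog_coeff k i) = of_real (harm j - harm (j div k) - ln (real k))"
proof (induction j)
  case 0
  then show ?case
    by (simp add: hlog_coeff_def harm_expand)
next
  case (Suc j)
  then show ?case
    using harm_Suc_div[OF k, of j]
    by (simp add: hlog_coeff_def harm_Suc inverse_eq_divide)
qed

lemma hk_eq:
  assumes k: "k \<ge> 1"
  shows "hk k j = of_real (harm j - harm (j div k) - ln (real k))"
proof -
  have "hk k j = fps_nth (Abs_fps (hlog_coeff k) * Abs_fps (\<lambda>_. 1)) j"
    unfolding hk_def fps_nth_fps_expansion[OF hfun_has_fps_expansion[OF k]] by simp
  also have "\<dots> = (\<Sum>i\<le>j. hlog_coeff k i)"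
    by (simp add: fps_mult_nth atLeast0AtMost)
  finally show ?thesis
    using sum_hlog_coeff[OF k] by simp
qed

lemma harm_block_bound:
  assumes q: "q \<ge> 1" and k: "k \<ge> 1"
    and lower: "real k * real q \<le> real j" and upper: "real j + 1 \<le> real k * (real q + 1)"
  shows "\<bar>harm j - harm q - ln (real k)\<bar> \<le> 2 / real q"
proof -
  define err where "err m = harm m - ln (real m + 1) - euler_mascheroni" for m
  have err_bounds: "- (1 / (2 * real m)) \<le> err m" "err m \<le> 0" if "m \<ge> 1" for m
    using euler_mascheroni_bounds[OF that] that by (auto simp: err_def field_simps)
  have "real q \<le> real j"
    using lower k mult_right_mono[of 1 "real k" "real q"] by simp
  then have "j \<ge> 1" "1 / (2 * real j) \<le> 1 / (2 * real q)"
    using q by (auto simp: frac_le)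
  have "ln (real j + 1) \<le> ln (real k * (real q + 1))"
    using upper k by simp
  also have "\<dots> = ln (real k) + ln (real q + 1)"
    using k by (simp add: ln_mult)
  finally have ln_upper: "ln (real j + 1) \<le> ln (real k) + ln (real q + 1)" .
  have "ln (real k) + ln (real q) = ln (real k * real q)"
    using k q by (simp add: ln_mult)
  also have "\<dots> \<le> ln (real j + 1)"
    using lower k q by simp
  finally have ln_lower: "ln (real k) + ln (real q) \<le> ln (real j + 1)" .
  have "ln (real q + 1) - ln (real q) < 1 / real q"
    using q by (intro ln_diff_le_inverse) simp
  moreover have "harm j - harm q - ln (real k) =
      err j - err q + (ln (real j + 1) - ln (real q + 1) - ln (real k))"
    by (simp add: err_def)
  moreover have "1 / (2 * real q) = (1 / real q) / 2" "2 / real q = 2 * (1 / real q)"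
    by simp_all
  ultimately show ?thesis
    using err_bounds[OF q] err_bounds[OF \<open>j \<ge> 1\<close>] \<open>1 / (2 * real j) \<le> 1 / (2 * real q)\<close>
      ln_upper ln_lower unfolding abs_le_iff by linarith
qed

lemma harm_div_bound:
  assumes k: "k \<ge> 1" and j: "j \<ge> k"
  shows "\<bar>harm j - harm (j div k) - ln (real k)\<bar> \<le> 4 * real k / real j"
proof -
  define q where "q = j div k"
  have "q \<ge> 1"
    using div_le_mono[OF j, of k] k by (simp add: q_def)
  have decomp: "real j = real k * real q + real (j mod k)"
    unfolding q_def by (metis mult_div_mod_eq of_nat_add of_nat_mult)
  have "j mod k + 1 \<le> k"
    using k by (simp add: Suc_le_eq)
  then have "real (j mod k) + 1 \<le> real k"
    by (metis of_nat_1 of_nat_add of_nat_le_iff)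
  then have lower: "real k * real q \<le> real j" and upper: "real j + 1 \<le> real k * (real q + 1)"
    using decomp by (simp_all add: algebra_simps)
  have "real j \<le> 2 * real k * real q"
    using upper mult_left_mono[of 1 "real q" "real k"] \<open>q \<ge> 1\<close> by (simp add: algebra_simps)
  then have "2 / real q \<le> 4 * real k / real j"
    using \<open>q \<ge> 1\<close> j k by (simp add: field_simps)
  with harm_block_bound[OF \<open>q \<ge> 1\<close> k lower upper] show ?thesis
    unfolding q_def by linarith
qed

lemma hk_H2:
  assumes k: "k \<ge> 1"
  shows "hk k \<in> H2"
  unfolding H2_iff
proof (rule summable_comparison_test')
  show "summable (\<lambda>j. (4 * real k)\<^sup>2 * inverse (real j ^ 2))"
    by (intro summable_mult inverse_power_summable) auto
  fix j assume "j \<ge> k"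
  have "cmod (hk k j) = \<bar>harm j - harm (j div k) - ln (real k)\<bar>"
    unfolding hk_eq[OF k] norm_of_real ..
  also have "\<dots> \<le> 4 * real k / real j"
    using k \<open>j \<ge> k\<close> by (rule harm_div_bound)
  finally have "(cmod (hk k j))\<^sup>2 \<le> (4 * real k / real j)\<^sup>2"
    by (intro power_mono) auto
  also have "\<dots> = (4 * real k)\<^sup>2 * inverse (real j ^ 2)"
    by (simp add: divide_inverse power_mult_distrib power_inverse)
  finally show "norm ((cmod (hk k j))\<^sup>2) \<le> (4 * real k)\<^sup>2 * inverse (real j ^ 2)"
    by simp
qed

lemma hk_1: "hk 1 = (\<lambda>_. 0)"
  by (simp add: fun_eq_iff hk_eq)

lemma hk_0: "k \<ge> 1 \<Longrightarrow> hk k 0 = - of_real (ln (real k))"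
  by (simp add: hk_eq)

section \<open>Orthogonality to \<open>\<N>\<close>\<close>

lemma W_funpow_hk:
  assumes n: "n \<ge> 1" and k: "k \<ge> 1"
  shows "(W n ^^ j) (hk k) = (\<lambda>m. hk (k * n ^ j) m - hk (n ^ j) m)"
proof
  fix m
  have "real n ^ j > 0"
    using n by simp
  then have "ln (real k * real n ^ j) = ln (real k) + ln (real n ^ j)"
    using k by (simp add: ln_mult)
  moreover have "m div (k * n ^ j) = m div n ^ j div k"
    by (metis div_mult2_eq mult.commute)
  ultimately show "(W n ^^ j) (hk k) m = hk (k * n ^ j) m - hk (n ^ j) m"
    using n k by (simp add: W_funpow hk_eq)
qed

lemma Nperp_orthogonal_hk:
  assumes g: "g \<in> Nperp" and k: "k \<ge> 1"
  shows "h2inner g (hk k) = 0"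
proof (cases "k = 1")
  case True
  show ?thesis
    unfolding True hk_1 by (simp add: h2inner_def)
next
  case False
  then have "hk k \<in> Nspan"
    unfolding Nspan_def mem_Collect_eq
    by (intro exI[of _ "{k}"] exI[of _ "\<lambda>_. 1"]) (use k in auto)
  then show ?thesis
    using g by (simp add: Nperp_def)
qed

lemma Nperp_orthogonal_W_funpow_hk:
  assumes g: "g \<in> Nperp" and n: "n \<ge> 1" and k: "k \<ge> 1"
  shows "h2inner g ((W n ^^ j) (hk k)) = 0"
proof -
  have "g \<in> H2" "k * n ^ j \<ge> 1" "n ^ j \<ge> 1"
    using g n k by (simp_all add: Nperp_def)
  then show ?thesis
    unfolding W_funpow_hk[OF n k]
    by (simp add: h2inner_diff_right hk_H2 Nperp_orthogonal_hk[OF g])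
qed

lemma orbit_orthogonal_poly_op_hk:
  assumes n: "n \<ge> 1" and f: "f \<in> H2" and g: "poly_op p (Wadj n) f \<in> Nperp" and k: "k \<ge> 1"
  shows "h2inner ((Wadj n ^^ j) f) (poly_op (map_poly cnj p) (W n) (hk k)) = 0"
proof -
  have orbit: "(Wadj n ^^ j) f \<in> H2"
    using Wadj_H2[OF n] f by (rule funpow_H2)
  have "h2inner ((Wadj n ^^ j) f) (poly_op (map_poly cnj p) (W n) (hk k)) =
      h2inner (poly_op p (Wadj n) ((Wadj n ^^ j) f)) (hk k)"
    using n orbit hk_H2[OF k] by (rule h2inner_poly_op_W)
  also have "\<dots> = h2inner ((Wadj n ^^ j) (poly_op p (Wadj n) f)) (hk k)"
    by (simp add: funpow_poly_op_commute[OF seq_linear_Wadj])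
  also have "\<dots> = h2inner (poly_op p (Wadj n) f) ((W n ^^ j) (hk k))"
    using g hk_H2[OF k] by (simp add: Nperp_def h2inner_W_funpow_right[OF n])
  also have "\<dots> = 0"
    using g n k by (rule Nperp_orthogonal_W_funpow_hk)
  finally show ?thesis .
qed

lemma Nperp_poly_op_Wadj_eq_0:
  assumes n: "n \<ge> 2" and hc: "hypercyclic (Wadj n) f" and g: "poly_op p (Wadj n) f \<in> Nperp"
  shows "p = 0"
proof (rule ccontr)
  assume "p \<noteq> 0"
  have n1: "n \<ge> 1" and f: "f \<in> H2"
    using n hc by (simp_all add: hypercyclic_def)
  have "poly_op (map_poly cnj p) (W n) (hk 2) = (\<lambda>_. 0)"
    using hc funpow_H2[OF Wadj_H2[OF n1] f] poly_op_H2[OF W_H2[OF n1] hk_H2]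
      orbit_orthogonal_poly_op_hk[OF n1 f g]
    by (intro orthogonal_hypercyclic_orbit) auto
  then have "hk 2 = (\<lambda>_. 0)"
    using \<open>p \<noteq> 0\<close>
    by (intro poly_op_eq_0_imp_zero[OF seq_linear_W W_H2[OF n1] W_no_eigenvalue[OF n] hk_H2])
      simp_all
  then have "hk 2 0 = 0"
    by simp
  then show False
    by (simp add: hk_0)
qed

theorem mainTheorem20:
  fixes n :: nat and f :: "nat \<Rightarrow> complex"
  assumes "n \<ge> 2"
    and "hypercyclic (Wstar n) f"
  shows "Nperp \<inter> Zorb (Wstar n) f = {(\<lambda>_. 0)}"
proof -
  have n: "n \<ge> 1"
    using assms(1) by simp
  have hc: "hypercyclic (Wadj n) f" and f: "f \<in> H2"
    using assms(2) hypercyclic_Wstar_iff[OF n] by (simp_all add: hypercyclic_def)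
  have "(\<lambda>_. 0) \<in> Nperp"
    by (simp add: Nperp_def H2_zero h2inner_def)
  moreover have "(\<lambda>_. 0) \<in> range (\<lambda>p. poly_op p (Wadj n) f)"
    by (rule image_eqI[where x = 0]) simp_all
  moreover have "g = (\<lambda>_. 0)" if "g \<in> Nperp \<inter> range (\<lambda>p. poly_op p (Wadj n) f)" for g
    using that by (auto dest: Nperp_poly_op_Wadj_eq_0[OF assms(1) hc])
  ultimately show ?thesis
    unfolding Zorb_Wstar[OF n f] by blast
qed

end
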